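(* In the E-phase model, for every formula $A$: (1) for every formula $D$ and every $n\ge 0$ and $T_1,\dots,T_n$ each a closed term or an atom, if $c^D T_1\cdots T_n\in[\![A]\!]$ then $c^D T_1\cdots T_n\in A^*$; and (2) $A^*\subseteq[\![A]\!]$.
   Context: System $\mathbf{IL}_{\mathbf{at}}$: formulas $A ::= X\mid A\to B\mid\forall X.A$ ($X$ atoms); terms $t ::= x\mid c^A\mid\lambda x.t\mid ts\mid\Lambda X.t\mid tX$ (a term-constant $c^A$ for each formula $A$; $tX$ only with $X$ an atom). $\Gamma\vdash t:A$ derivable by: $\Gamma,x:A\vdash x:A$; $\Gamma\vdash c^A:A$; $\to$-introduction and elimination (abstraction, application); $\forall$-introduction $\Gamma\vdash\Lambda X.t:\forall X.A$ from $\Gamma\vdash t:A$ if $X$ is not free in the formulas of $\Gamma$; $\forall$-elimination $\Gamma\vdash tY:A[X:=Y]$ from $\Gamma\vdash t:\forall X.A$ for atoms $Y$. $\beta$-reduction $(\lambda x.t)s\to_\beta t[x:=s]$, $(\Lambda X.t)Y\to_\beta t[X:=Y]$ in any subterm position; normal = no redex; $\twoheadrightarrow$ reflexive-transitive closure. Closed term = no free term-variables. $[\![A]\!]$ = set of closed terms $t$ with $t\twoheadrightarrow s$ for some normal $s$ such that $\vdash s:A$ is derivable. E-phase model: interpretation of formulas as sets of closed terms: $X^*=[\![X]\!]$; $(A\to B)^*=\{t\text{ closed}\mid ts\in B^*\text{ for every }s\in A^*\}$; $(\forall X.A)^*=\{t\text{ closed}\mid tY\in(A[X:=Y])^*\text{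 for every atom }Y\}$. *)

theory Defs
  imports Main
begin

text \<open>Atoms are natural numbers used as de Bruijn indices: an atom index below the
 current binder depth refers to a binder, indices beyond refer to free atoms.
 Formulas and terms are thus taken up to alpha-equivalence.\<close>

datatype fm = At nat | Imp fm fm | All fm

fun liftF :: "nat \<Rightarrow> fm \<Rightarrow> fm" where
  "liftF k (At i) = At (if i < k then i else Suc i)"
| "liftF k (Imp A B) = Imp (liftF k A) (liftF k B)"
| "liftF k (All A) = All (liftF (Suc k) A)"

text \<open>substF k y A replaces atom index k by y (y relative to depth k, so y >= k at
 the intended calls) and decrements indices above k. A[X:=Y] for the body of
 All X.A is substF 0 Y A.\<close>
fun substF :: "nat \<Rightarrow> nat \<Rightarrow> fm \<Rightarrow> fm" where
  "substF k y (At i) = At (if i < k then i else if i = k then y else i - 1)"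
| "substF k y (Imp A B) = Imp (substF k y A) (substF k y B)"
| "substF k y (All A) = All (substF (Suc k) (Suc y) A)"

lemma size_substF[simp]: "size (substF k y A) = size A"
  by (induction A arbitrary: k y) auto

text \<open>Terms: term variables (de Bruijn), constants c^A, lambda, application,
 type abstraction, application to an atom.\<close>
datatype tm = Var nat | Cst fm | Lam tm | App tm tm | TLam tm | TApp tm nat

fun liftV :: "nat \<Rightarrow> tm \<Rightarrow> tm" where
  "liftV k (Var i) = Var (if i < k then i else Suc i)"
| "liftV k (Cst A) = Cst A"
| "liftV k (Lam t) = Lam (liftV (Suc k) t)"
| "liftV k (App t s) = App (liftV k t) (liftV k s)"
| "liftV k (TLam t) = TLam (liftV k t)"
| "liftV k (TApp t Y) = TApp (liftV k t) Y"

fun liftT :: "nat \<Rightarrow> tm \<Rightarrow> tm" where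
  "liftT k (Var i) = Var i"
| "liftT k (Cst A) = Cst (liftF k A)"
| "liftT k (Lam t) = Lam (liftT k t)"
| "liftT k (App t s) = App (liftT k t) (liftT k s)"
| "liftT k (TLam t) = TLam (liftT (Suc k) t)"
| "liftT k (TApp t Y) = TApp (liftT k t) (if Y < k then Y else Suc Y)"

fun substV :: "nat \<Rightarrow> tm \<Rightarrow> tm \<Rightarrow> tm" where
  "substV k s (Var i) = (if i < k then Var i else if i = k then s else Var (i - 1))"
| "substV k s (Cst A) = Cst A"
| "substV k s (Lam t) = Lam (substV (Suc k) (liftV 0 s) t)"
| "substV k s (App t u) = App (substV k s t) (substV k s u)"
| "substV k s (TLam t) = TLam (substV k (liftT 0 s) t)"
| "substV k s (TApp t Y) = TApp (substV k s t) Y"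

fun substT :: "nat \<Rightarrow> nat \<Rightarrow> tm \<Rightarrow> tm" where
  "substT k y (Var i) = Var i"
| "substT k y (Cst A) = Cst (substF k y A)"
| "substT k y (Lam t) = Lam (substT k y t)"
| "substT k y (App t u) = App (substT k y t) (substT k y u)"
| "substT k y (TLam t) = TLam (substT (Suc k) (Suc y) t)"
| "substT k y (TApp t Y) = TApp (substT k y t) (if Y < k then Y else if Y = k then y else Y - 1)"

text \<open>Typing judgement Gamma |- t : A (contexts are de Bruijn lists of formulas).
 The forall-introduction rule lifts the context: this is the eigenvariable
 condition "X not free in Gamma".\<close>
inductive has_type :: "fm list \<Rightarrow> tm \<Rightarrow> fm \<Rightarrow> bool" where
  ty_var: "i < length \<Gamma> \<Longrightarrow> has_type \<Gamma> (Var i) (\<Gamma> ! i)"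
| ty_cst: "has_type \<Gamma> (Cst A) A"
| ty_lam: "has_type (A # \<Gamma>) t B \<Longrightarrow> has_type \<Gamma> (Lam t) (Imp A B)"
| ty_app: "has_type \<Gamma> t (Imp A B) \<Longrightarrow> has_type \<Gamma> s A \<Longrightarrow> has_type \<Gamma> (App t s) B"
| ty_tlam: "has_type (map (liftF 0) \<Gamma>) t A \<Longrightarrow> has_type \<Gamma> (TLam t) (All A)"
| ty_tapp: "has_type \<Gamma> t (All A) \<Longrightarrow> has_type \<Gamma> (TApp t Y) (substF 0 Y A)"

inductive beta :: "tm \<Rightarrow> tm \<Rightarrow> bool" where
  b_lam: "beta (App (Lam t) s) (substV 0 s t)"
| b_tlam: "beta (TApp (TLam t) Y) (substT 0 Y t)"
| c_lam: "beta t t' \<Longrightarrow> beta (Lam t) (Lam t')"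
| c_appl: "beta t t' \<Longrightarrow> beta (App t s) (App t' s)"
| c_appr: "beta s s' \<Longrightarrow> beta (App t s) (App t s')"
| c_tlam: "beta t t' \<Longrightarrow> beta (TLam t) (TLam t')"
| c_tapp: "beta t t' \<Longrightarrow> beta (TApp t Y) (TApp t' Y)"

definition normal :: "tm \<Rightarrow> bool" where
  "normal t \<longleftrightarrow> \<not> (\<exists>u. beta t u)"

abbreviation reds :: "tm \<Rightarrow> tm \<Rightarrow> bool" where
  "reds \<equiv> beta\<^sup>*\<^sup>*"

text \<open>Closed terms: no free term variables (free atoms are allowed).\<close>
fun closedV :: "nat \<Rightarrow> tm \<Rightarrow> bool" where
  "closedV k (Var i) = (i < k)"
| "closedV k (Cst A) = True"
| "closedV k (Lam t) = closedV (Suc k) t"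
| "closedV k (App t s) = (closedV k t \<and> closedV k s)"
| "closedV k (TLam t) = closedV k t"
| "closedV k (TApp t Y) = closedV k t"

definition closed :: "tm \<Rightarrow> bool" where
  "closed t \<longleftrightarrow> closedV 0 t"

definition sem :: "fm \<Rightarrow> tm set" where
  "sem A = {t. closed t \<and> (\<exists>s. reds t s \<and> normal s \<and> has_type [] s A)}"

function star :: "fm \<Rightarrow> tm set" where
  "star (At X) = sem (At X)"
| "star (Imp A B) = {t. closed t \<and> (\<forall>s \<in> star A. App t s \<in> star B)}"
| "star (All A) = {t. closed t \<and> (\<forall>Y. TApp t Y \<in> star (substF 0 Y A))}"
  by pat_completeness auto
termination by (relation "measure size") auto

text \<open>Application of a head term to a list of arguments, each a term (Inl) or an atom (Inr).\<close>
fun apps :: "tm \<Rightarrow> (tm + nat) list \<Rightarrow> tm" where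
  "apps t [] = t"
| "apps t (Inl s # Ts) = apps (App t s) Ts"
| "apps t (Inr Y # Ts) = apps (TApp t Y) Ts"

end

theory Submission imports Defs begin

(* Both claims are proved together by induction on A (the predicate adequate below).

   For A -> B: reduction keeps a term constant-headed, and a constant-headed normal form
   applied to a normal form is again normal. Hence a constant-headed t in [[A -> B]] applied
   to s in A^* (a subset of [[A]]) lies in [[B]] and, still being constant-headed, in B^*.
   Conversely, let t be in (A -> B)^*. By the first claim c^A is in A^*, so t c^A lies in
   B^*, hence in [[B]]. A normal form of t c^A is either t' c^A with t reducing to t', or
   m'[x := c^A] where t reduces to \<lambda>x. m and m to m'. The constant c^A acts as a variable
   of type A, so in both cases t has a normal form of type A -> B.

   For \<forall>X. A the argument is the same with a fresh atom Y in place of c^A. The subtle point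
   is the case of a normal form t' Y: from t' : \<forall>X. A' and A'[X := Y] = A[X := Y] we get
   A' = A only because Y does not occur in A'. This holds since t' is closed, normal and not
   an abstraction, hence constant-headed, so every atom of its type occurs in t', and Y does
   not. *)

section \<open>Renaming of atoms\<close>

fun lift_ren :: "(nat \<Rightarrow> nat) \<Rightarrow> nat \<Rightarrow> nat" where
  "lift_ren r 0 = 0"
| "lift_ren r (Suc i) = Suc (r i)"

fun renF :: "(nat \<Rightarrow> nat) \<Rightarrow> fm \<Rightarrow> fm" where
  "renF r (At i) = At (r i)"
| "renF r (Imp A B) = Imp (renF r A) (renF r B)"
| "renF r (All A) = All (renF (lift_ren r) A)"

fun renT :: "(nat \<Rightarrow> nat) \<Rightarrow> tm \<Rightarrow> tm" where
  "renT r (Var i) = Var i"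
| "renT r (Cst A) = Cst (renF r A)"
| "renT r (Lam t) = Lam (renT r t)"
| "renT r (App t s) = App (renT r t) (renT r s)"
| "renT r (TLam t) = TLam (renT (lift_ren r) t)"
| "renT r (TApp t Y) = TApp (renT r t) (r Y)"

definition shift_atom :: "nat \<Rightarrow> nat \<Rightarrow> nat" where
  "shift_atom k i = (if i < k then i else Suc i)"

definition inst_atom :: "nat \<Rightarrow> nat \<Rightarrow> nat \<Rightarrow> nat" where
  "inst_atom k y i = (if i < k then i else if i = k then y else i - 1)"

lemma lift_ren_shift_atom: "lift_ren (shift_atom k) = shift_atom (Suc k)"
proof
  show "lift_ren (shift_atom k) i = shift_atom (Suc k) i" for i
    by (cases i) (auto simp: shift_atom_def)
qed

lemma lift_ren_inst_atom: "lift_ren (inst_atom k y) = inst_atom (Suc k) (Suc y)"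
proof
  show "lift_ren (inst_atom k y) i = inst_atom (Suc k) (Suc y) i" for i
    by (cases i) (auto simp: inst_atom_def)
qed

lemma lift_ren_comp: "lift_ren r \<circ> lift_ren s = lift_ren (r \<circ> s)"
proof
  show "(lift_ren r \<circ> lift_ren s) i = lift_ren (r \<circ> s) i" for i
    by (cases i) auto
qed

lemma lift_ren_ident: "lift_ren (\<lambda>i. i) = (\<lambda>i. i)"
proof
  show "lift_ren (\<lambda>i. i) i = i" for i
    by (cases i) auto
qed

lemma liftF_eq_renF: "liftF k A = renF (shift_atom k) A"
  by (induction A arbitrary: k) (auto simp: shift_atom_def lift_ren_shift_atom)

lemma substF_eq_renF: "substF k y A = renF (inst_atom k y) A"
  by (induction A arbitrary: k y) (auto simp: inst_atom_def lift_ren_inst_atom)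

lemma liftT_eq_renT: "liftT k t = renT (shift_atom k) t"
  by (induction t arbitrary: k) (auto simp: shift_atom_def lift_ren_shift_atom liftF_eq_renF)

lemma substT_eq_renT: "substT k y t = renT (inst_atom k y) t"
  by (induction t arbitrary: k y) (auto simp: inst_atom_def lift_ren_inst_atom substF_eq_renF)

lemma renF_renF [simp]: "renF r (renF s A) = renF (r \<circ> s) A"
  by (induction A arbitrary: r s) (auto simp: lift_ren_comp)

lemma renT_renT [simp]: "renT r (renT s t) = renT (r \<circ> s) t"
  by (induction t arbitrary: r s) (auto simp: lift_ren_comp)

lemma renF_ident: "renF (\<lambda>i. i) A = A"
  by (induction A) (auto simp: lift_ren_ident)

lemma renT_ident: "renT (\<lambda>i. i) t = t"
  by (induction t) (auto simp: lift_ren_ident renF_ident)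

fun atomsF :: "fm \<Rightarrow> nat set" where
  "atomsF (At i) = {i}"
| "atomsF (Imp A B) = atomsF A \<union> atomsF B"
| "atomsF (All A) = {i. Suc i \<in> atomsF A}"

fun atomsT :: "tm \<Rightarrow> nat set" where
  "atomsT (Var i) = {}"
| "atomsT (Cst A) = atomsF A"
| "atomsT (Lam t) = atomsT t"
| "atomsT (App t s) = atomsT t \<union> atomsT s"
| "atomsT (TLam t) = {i. Suc i \<in> atomsT t}"
| "atomsT (TApp t Y) = insert Y (atomsT t)"

lemma lift_ren_image_Suc: "{i. Suc i \<in> lift_ren r ` S} = r ` {i. Suc i \<in> S}"
proof (intro set_eqI iffI)
  fix i assume "i \<in> {i. Suc i \<in> lift_ren r ` S}"
  then obtain j where "j \<in> S" "lift_ren r j = Suc i" by auto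
  then show "i \<in> r ` {i. Suc i \<in> S}" by (cases j) auto
next
  fix i assume "i \<in> r ` {i. Suc i \<in> S}"
  then obtain j where "Suc j \<in> S" "i = r j" by auto
  then have "lift_ren r (Suc j) = Suc i" by simp
  with \<open>Suc j \<in> S\<close> show "i \<in> {i. Suc i \<in> lift_ren r ` S}" by (metis mem_Collect_eq image_eqI)
qed

lemma atomsF_renF: "atomsF (renF r A) = r ` atomsF A"
  by (induction A arbitrary: r) (auto simp: lift_ren_image_Suc)

lemma atomsT_renT: "atomsT (renT r t) = r ` atomsT t"
  by (induction t arbitrary: r) (auto simp: atomsF_renF lift_ren_image_Suc)

lemma finite_Suc_preimage: "finite S \<Longrightarrow> finite {i. Suc i \<in> S}"
  using finite_vimageI[of S Suc] by (simp add: vimage_def)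

lemma finite_atomsF: "finite (atomsF A)"
  by (induction A) (auto simp: finite_Suc_preimage)

lemma finite_atomsT: "finite (atomsT t)"
  by (induction t) (auto simp: finite_atomsF finite_Suc_preimage)

lemma renF_cong: "(\<And>i. i \<in> atomsF A \<Longrightarrow> r i = s i) \<Longrightarrow> renF r A = renF s A"
proof (induction A arbitrary: r s)
  case (Imp A B)
  show ?case using Imp.IH[of r s] Imp.prems by simp
next
  case (All A)
  have "lift_ren r i = lift_ren s i" if "i \<in> atomsF A" for i
  proof (cases i)
    case (Suc j)
    then show ?thesis using All.prems[of j] that by simp
  qed simp
  then show ?case using All.IH[of "lift_ren r" "lift_ren s"] by simp
qed simp

lemma renT_cong: "(\<And>i. i \<in> atomsT t \<Longrightarrow> r i = s i) \<Longrightarrow> renT r t = renT s t"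
proof (induction t arbitrary: r s)
  case (Cst A)
  show ?case using renF_cong[of A r s] Cst.prems by simp
next
  case (Lam t)
  show ?case using Lam.IH[of r s] Lam.prems by simp
next
  case (App t u)
  show ?case using App.IH[of r s] App.prems by simp
next
  case (TLam t)
  have "lift_ren r i = lift_ren s i" if "i \<in> atomsT t" for i
  proof (cases i)
    case (Suc j)
    then show ?thesis using TLam.prems[of j] that by simp
  qed simp
  then show ?case using TLam.IH[of "lift_ren r" "lift_ren s"] by simp
next
  case (TApp t Y)
  show ?case using TApp.IH[of r s] TApp.prems by simp
qed simp

section \<open>Substitution and reduction\<close>

lemma lift_ren_shift_atom_0: "lift_ren r \<circ> shift_atom 0 = shift_atom 0 \<circ> r"
  by (rule ext) (simp add: shift_atom_def)

lemma inst_atom_shift_atom_0: "inst_atom 0 Y \<circ> shift_atom 0 = (\<lambda>i. i)"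
  by (rule ext) (simp add: shift_atom_def inst_atom_def)

lemma inst_atom_lift_ren: "inst_atom 0 (r Y) \<circ> lift_ren r = r \<circ> inst_atom 0 Y"
proof
  show "(inst_atom 0 (r Y) \<circ> lift_ren r) i = (r \<circ> inst_atom 0 Y) i" for i
    by (cases i) (auto simp: inst_atom_def)
qed

lemma renT_liftV [simp]: "renT r (liftV j s) = liftV j (renT r s)"
  by (induction s arbitrary: r j) auto

lemma renT_liftT_0: "renT (lift_ren r) (liftT 0 s) = liftT 0 (renT r s)"
  by (simp add: liftT_eq_renT lift_ren_shift_atom_0)

lemma renT_substV: "renT r (substV k s t) = substV k (renT r s) (renT r t)"
  by (induction t arbitrary: r k s) (auto simp: renT_liftT_0)

lemma renF_substF_0: "renF r (substF 0 Y A) = substF 0 (r Y) (renF (lift_ren r) A)"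
  by (simp add: substF_eq_renF inst_atom_lift_ren)

lemma renT_substT_0: "renT r (substT 0 Y t) = substT 0 (r Y) (renT (lift_ren r) t)"
  by (simp add: substT_eq_renT inst_atom_lift_ren)

lemma substV_Cst_liftV: "j \<le> k \<Longrightarrow> substV (Suc k) (Cst C) (liftV j s) = liftV j (substV k (Cst C) s)"
  by (induction s arbitrary: j k C) auto

lemma substV_Cst_liftT_0: "substV k (Cst (liftF 0 C)) (liftT 0 s) = liftT 0 (substV k (Cst C) s)"
  by (simp add: liftT_eq_renT liftF_eq_renF renT_substV)

lemma substV_Cst_substV: "j \<le> k \<Longrightarrow>
  substV k (Cst C) (substV j s t) = substV j (substV k (Cst C) s) (substV (Suc k) (Cst C) t)"
  by (induction t arbitrary: j k s C) (auto simp: substV_Cst_liftV substV_Cst_liftT_0)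

lemma substV_Cst_substT_0: "substV k (Cst C) (substT 0 Y t) = substT 0 Y (substV k (Cst (liftF 0 C)) t)"
  by (simp add: substT_eq_renT renT_substV liftF_eq_renF inst_atom_shift_atom_0 renF_ident)

lemma renT_eq_iff:
  "Lam t = renT r m \<longleftrightarrow> (\<exists>t0. m = Lam t0 \<and> t = renT r t0)"
  "App t s = renT r m \<longleftrightarrow> (\<exists>t0 s0. m = App t0 s0 \<and> t = renT r t0 \<and> s = renT r s0)"
  "TLam t = renT r m \<longleftrightarrow> (\<exists>t0. m = TLam t0 \<and> t = renT (lift_ren r) t0)"
  "TApp t Y = renT r m \<longleftrightarrow> (\<exists>t0 Y0. m = TApp t0 Y0 \<and> t = renT r t0 \<and> Y = r Y0)"
  by (cases m; auto)+

lemma substV_Cst_eq_iff: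
  "Lam t = substV k (Cst C) m \<longleftrightarrow> (\<exists>t0. m = Lam t0 \<and> t = substV (Suc k) (Cst C) t0)"
  "App t s = substV k (Cst C) m \<longleftrightarrow>
     (\<exists>t0 s0. m = App t0 s0 \<and> t = substV k (Cst C) t0 \<and> s = substV k (Cst C) s0)"
  "TLam t = substV k (Cst C) m \<longleftrightarrow> (\<exists>t0. m = TLam t0 \<and> t = substV k (Cst (liftF 0 C)) t0)"
  "TApp t Y = substV k (Cst C) m \<longleftrightarrow> (\<exists>t0. m = TApp t0 Y \<and> t = substV k (Cst C) t0)"
  by (cases m; auto)+

lemma beta_renT: "beta t u \<Longrightarrow> beta (renT r t) (renT r u)"
proof (induction arbitrary: r rule: beta.induct)
  case (b_lam t s)
  show ?case by (simp add: renT_substV beta.b_lam)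
next
  case (b_tlam t Y)
  show ?case by (simp add: renT_substT_0 beta.b_tlam)
qed (auto intro: beta.intros)

lemma beta_renT_back: "beta (renT r m) v \<Longrightarrow> \<exists>m'. beta m m' \<and> v = renT r m'"
proof (induction "renT r m" v arbitrary: r m rule: beta.induct)
  case (b_lam t s)
  then obtain t0 s0 where "m = App (Lam t0) s0" "t = renT r t0" "s = renT r s0"
    by (metis renT_eq_iff(1,2))
  then show ?case by (metis beta.b_lam renT_substV)
next
  case (b_tlam t Y)
  then obtain t0 Y0 where "m = TApp (TLam t0) Y0" "t = renT (lift_ren r) t0" "Y = r Y0"
    by (metis renT_eq_iff(3,4))
  then show ?case by (metis beta.b_tlam renT_substT_0)
qed (fastforce simp: renT_eq_iff intro: beta.intros)+

lemma beta_substV_Cst: "beta t u \<Longrightarrow> beta (substV k (Cst C) t) (substV k (Cst C) u)"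
proof (induction arbitrary: k C rule: beta.induct)
  case (b_lam t s)
  show ?case by (simp add: substV_Cst_substV beta.b_lam)
next
  case (b_tlam t Y)
  show ?case by (simp add: substV_Cst_substT_0 beta.b_tlam)
qed (auto intro: beta.intros)

lemma beta_substV_Cst_back:
  "beta (substV k (Cst C) m) v \<Longrightarrow> \<exists>m'. beta m m' \<and> v = substV k (Cst C) m'"
proof (induction "substV k (Cst C) m" v arbitrary: k C m rule: beta.induct)
  case (b_lam t s)
  then obtain t0 s0 where
    "m = App (Lam t0) s0" "t = substV (Suc k) (Cst C) t0" "s = substV k (Cst C) s0"
    by (metis substV_Cst_eq_iff(1,2))
  then show ?case by (metis beta.b_lam substV_Cst_substV zero_le)
next
  case (b_tlam t Y)
  then obtain t0 where "m = TApp (TLam t0) Y" "t = substV k (Cst (liftF 0 C)) t0"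
    by (metis substV_Cst_eq_iff(3,4))
  then show ?case by (metis beta.b_tlam substV_Cst_substT_0)
qed (fastforce simp: substV_Cst_eq_iff intro: beta.intros)+

lemma reds_map:
  assumes "\<And>x y. beta x y \<Longrightarrow> beta (f x) (f y)" and "reds x y"
  shows "reds (f x) (f y)"
  using assms(2) by induction (auto intro: rtranclp.rtrancl_into_rtrancl assms(1))

lemma reds_pullback:
  assumes "\<And>m v. beta (f m) v \<Longrightarrow> \<exists>m'. beta m m' \<and> v = f m'" and "reds (f m) u"
  shows "\<exists>m'. reds m m' \<and> u = f m'"
  using assms(2) by induction (use assms(1) in \<open>blast intro: rtranclp.rtrancl_into_rtrancl\<close>)+

lemma reds_Lam: "reds t t' \<Longrightarrow> reds (Lam t) (Lam t')"
  by (rule reds_map) (rule beta.c_lam)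

lemma reds_TLam: "reds t t' \<Longrightarrow> reds (TLam t) (TLam t')"
  by (rule reds_map) (rule beta.c_tlam)

lemma reds_TApp: "reds t t' \<Longrightarrow> reds (TApp t Y) (TApp t' Y)"
  by (rule reds_map) (rule beta.c_tapp)

lemma reds_App: "reds t t' \<Longrightarrow> reds s s' \<Longrightarrow> reds (App t s) (App t' s')"
  using reds_map[of "\<lambda>t. App t s" t t'] reds_map[of "App t'" s s']
  by (meson beta.c_appl beta.c_appr rtranclp_trans)

lemma normal_renT: "normal (renT r m) \<Longrightarrow> normal m"
  unfolding normal_def using beta_renT by blast

lemma normal_substV_Cst: "normal (substV k (Cst C) m) \<Longrightarrow> normal m"
  unfolding normal_def using beta_substV_Cst by blast

lemma atomsT_liftV [simp]: "atomsT (liftV j s) = atomsT s"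
  by (induction s arbitrary: j) auto

lemma atomsT_liftT_0: "atomsT (liftT 0 s) = Suc ` atomsT s"
  by (auto simp: liftT_eq_renT atomsT_renT shift_atom_def)

lemma atomsT_substV: "atomsT (substV k s t) \<subseteq> atomsT s \<union> atomsT t"
proof (induction t arbitrary: k s)
  case (Lam t)
  show ?case using Lam.IH[of "Suc k" "liftV 0 s"] by simp
next
  case (App t u)
  show ?case using App.IH[of k s] by auto
next
  case (TLam t)
  show ?case using TLam.IH[of k "liftT 0 s"] by (auto simp: atomsT_liftT_0)
next
  case (TApp t Y)
  show ?case using TApp.IH[of k s] by auto
qed auto

lemma atomsT_beta: "beta t u \<Longrightarrow> atomsT u \<subseteq> atomsT t"
proof (induction rule: beta.induct)
  case (b_lam t s)
  then show ?case using atomsT_substV by fastforce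
next
  case (b_tlam t Y)
  then show ?case by (auto simp: substT_eq_renT atomsT_renT inst_atom_def)
qed auto

lemma atomsT_reds: "reds t u \<Longrightarrow> atomsT u \<subseteq> atomsT t"
  by (induction rule: rtranclp_induct) (auto dest: atomsT_beta)

inductive_cases beta_CstE: "beta (Cst A) u"
inductive_cases beta_LamE: "beta (Lam t) u"
inductive_cases beta_AppE: "beta (App t s) u"
inductive_cases beta_TLamE: "beta (TLam t) u"
inductive_cases beta_TAppE: "beta (TApp t Y) u"

lemma reds_Cst: "reds (Cst A) u \<Longrightarrow> u = Cst A"
  by (induction rule: rtranclp_induct) (auto elim: beta_CstE)

lemma reds_App_cases:
  assumes "reds (App t s) u"
  obtains (congr) t' s' where "reds t t'" "reds s s'" "u = App t' s'"
  | (contract) m s' where "reds t (Lam m)" "reds s s'" "reds (substV 0 s' m) u"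
proof -
  have "(\<exists>t' s'. reds t t' \<and> reds s s' \<and> u = App t' s') \<or>
    (\<exists>m s'. reds t (Lam m) \<and> reds s s' \<and> reds (substV 0 s' m) u)"
    using assms
  proof (induction "App t s" arbitrary: t s rule: converse_rtranclp_induct)
    case (step y)
    from step.hyps(1) show ?case
    proof (rule beta_AppE)
      fix m assume "t = Lam m" "y = substV 0 s m"
      then show ?thesis using step.hyps(2) by blast
    next
      fix t' assume "y = App t' s" "beta t t'"
      with step.hyps(3)[OF \<open>y = App t' s\<close>] show ?thesis
        by (blast intro: converse_rtranclp_into_rtranclp)
    next
      fix s' assume "y = App t s'" "beta s s'"
      with step.hyps(3)[OF \<open>y = App t s'\<close>] show ?thesis
        by (blast intro: converse_rtranclp_into_rtranclp)
    qed
  qed blast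
  with that show thesis by blast
qed

lemma reds_TApp_cases:
  assumes "reds (TApp t Y) u"
  obtains (congr) t' where "reds t t'" "u = TApp t' Y"
  | (contract) m where "reds t (TLam m)" "reds (substT 0 Y m) u"
proof -
  have "(\<exists>t'. reds t t' \<and> u = TApp t' Y) \<or> (\<exists>m. reds t (TLam m) \<and> reds (substT 0 Y m) u)"
    using assms
  proof (induction "TApp t Y" arbitrary: t rule: converse_rtranclp_induct)
    case (step y)
    from step.hyps(1) show ?case
    proof (rule beta_TAppE)
      fix m assume "t = TLam m" "y = substT 0 Y m"
      then show ?thesis using step.hyps(2) by blast
    next
      fix t' assume "y = TApp t' Y" "beta t t'"
      with step.hyps(3)[OF \<open>y = TApp t' Y\<close>] show ?thesis
        by (blast intro: converse_rtranclp_into_rtranclp)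
    qed
  qed blast
  with that show thesis by blast
qed

inductive_cases has_type_VarE: "has_type \<Gamma> (Var i) B"
inductive_cases has_type_CstE: "has_type \<Gamma> (Cst A) B"
inductive_cases has_type_LamE: "has_type \<Gamma> (Lam t) B"
inductive_cases has_type_AppE: "has_type \<Gamma> (App t s) B"
inductive_cases has_type_TLamE: "has_type \<Gamma> (TLam t) B"
inductive_cases has_type_TAppE: "has_type \<Gamma> (TApp t Y) B"

lemma has_type_renT: "has_type \<Gamma> t A \<Longrightarrow> has_type (map (renF r) \<Gamma>) (renT r t) (renF r A)"
proof (induction arbitrary: r rule: has_type.induct)
  case (ty_var i \<Gamma>)
  then show ?case using has_type.ty_var[of i "map (renF r) \<Gamma>"] by simp
next
  case (ty_tlam \<Gamma> t A)
  have "map (renF (lift_ren r)) (map (liftF 0) \<Gamma>) = map (liftF 0) (map (renF r) \<Gamma>)"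
    by (simp add: liftF_eq_renF lift_ren_shift_atom_0)
  then have "has_type (map (liftF 0) (map (renF r) \<Gamma>)) (renT (lift_ren r) t) (renF (lift_ren r) A)"
    using ty_tlam.IH[of "lift_ren r"] by metis
  then show ?case by (simp add: has_type.ty_tlam)
next
  case (ty_tapp \<Gamma> t A Y)
  then show ?case by (simp add: renF_substF_0 has_type.ty_tapp)
qed (auto intro: has_type.intros)

lemma has_type_substV_Cst:
  "has_type \<Gamma> (substV k (Cst C) t) B \<Longrightarrow> k \<le> length \<Gamma> \<Longrightarrow>
   has_type (take k \<Gamma> @ C # drop k \<Gamma>) t B"
proof (induction t arbitrary: \<Gamma> k C B)
  case (Var i)
  let ?\<Delta> = "take k \<Gamma> @ C # drop k \<Gamma>"
  have "i < length ?\<Delta> \<and> ?\<Delta> ! i = B"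
    using Var.prems by (auto elim!: has_type_VarE has_type_CstE simp: nth_append split: if_splits)
  then show ?case by (metis has_type.ty_var)
next
  case (Cst A)
  then show ?case by (auto elim!: has_type_CstE intro: has_type.ty_cst)
next
  case (Lam t)
  from Lam.prems obtain A B' where
    "B = Imp A B'" "has_type (A # \<Gamma>) (substV (Suc k) (Cst C) t) B'"
    by (auto elim: has_type_LamE)
  with Lam.IH[of "A # \<Gamma>" "Suc k" C B'] Lam.prems show ?case
    by (auto intro: has_type.ty_lam)
next
  case (App t u)
  from App.prems obtain A where
    "has_type \<Gamma> (substV k (Cst C) t) (Imp A B)" "has_type \<Gamma> (substV k (Cst C) u) A"
    by (auto elim: has_type_AppE)
  with App.IH App.prems(2) show ?case by (blast intro: has_type.ty_app)
next
  case (TLam t)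
  from TLam.prems obtain B' where
    "B = All B'" "has_type (map (liftF 0) \<Gamma>) (substV k (Cst (liftF 0 C)) t) B'"
    by (auto elim: has_type_TLamE)
  with TLam.IH[of "map (liftF 0) \<Gamma>" k "liftF 0 C" B'] TLam.prems show ?case
    by (auto intro: has_type.ty_tlam simp: take_map drop_map)
next
  case (TApp t Y)
  from TApp.prems obtain A where "B = substF 0 Y A" "has_type \<Gamma> (substV k (Cst C) t) (All A)"
    by (auto elim: has_type_TAppE)
  with TApp.IH TApp.prems(2) show ?case by (blast intro: has_type.ty_tapp)
qed

section \<open>Constant-headed normal forms\<close>

inductive const_headed :: "tm \<Rightarrow> bool" where
  head_Cst: "const_headed (Cst D)"
| head_App: "const_headed t \<Longrightarrow> const_headed (App t s)"
| head_TApp: "const_headed t \<Longrightarrow> const_headed (TApp t Y)"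

inductive_cases const_headed_LamE: "const_headed (Lam t)"
inductive_cases const_headed_TLamE: "const_headed (TLam t)"
inductive_cases const_headed_AppE: "const_headed (App t s)"
inductive_cases const_headed_TAppE: "const_headed (TApp t Y)"

lemma const_headed_apps: "const_headed t \<Longrightarrow> const_headed (apps t Ts)"
  by (induction t Ts rule: apps.induct) (auto intro: const_headed.intros)

lemma const_headed_beta: "beta t u \<Longrightarrow> const_headed t \<Longrightarrow> const_headed u"
  by (induction rule: beta.induct)
    (auto elim: const_headed_LamE const_headed_TLamE const_headed_AppE const_headed_TAppE
      intro: const_headed.intros)

lemma const_headed_reds: "reds t u \<Longrightarrow> const_headed t \<Longrightarrow> const_headed u"
  by (induction rule: rtranclp_induct) (auto dest: const_headed_beta)

lemma normal_Cst: "normal (Cst D)"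
  unfolding normal_def by (auto elim: beta_CstE)

lemma normal_Lam: "normal m \<Longrightarrow> normal (Lam m)"
  unfolding normal_def by (auto elim: beta_LamE)

lemma normal_TLam: "normal m \<Longrightarrow> normal (TLam m)"
  unfolding normal_def by (auto elim: beta_TLamE)

lemma normal_AppD: "normal (App t s) \<Longrightarrow> normal t"
  unfolding normal_def by (auto intro: beta.c_appl)

lemma normal_TAppD: "normal (TApp t Y) \<Longrightarrow> normal t"
  unfolding normal_def by (auto intro: beta.c_tapp)

lemma normal_App_const_headed: "const_headed n \<Longrightarrow> normal n \<Longrightarrow> normal s \<Longrightarrow> normal (App n s)"
  unfolding normal_def by (auto elim: beta_AppE const_headed_LamE)

lemma normal_TApp_const_headed: "const_headed n \<Longrightarrow> normal n \<Longrightarrow> normal (TApp n Y)"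
  unfolding normal_def by (auto elim: beta_TAppE const_headed_TLamE)

lemma normal_typed_const_headed:
  "has_type [] t B \<Longrightarrow> normal t \<Longrightarrow> \<forall>m. t \<noteq> Lam m \<Longrightarrow> \<forall>m. t \<noteq> TLam m \<Longrightarrow> const_headed t"
proof (induction t arbitrary: B)
  case (Var i)
  then show ?case by (auto elim: has_type_VarE)
next
  case (Cst A)
  show ?case by (rule head_Cst)
next
  case (App t s)
  from App.prems(1) obtain A where t: "has_type [] t (Imp A B)" by (auto elim: has_type_AppE)
  moreover have "normal t" using App.prems(2) by (rule normal_AppD)
  moreover have "\<forall>m. t \<noteq> Lam m" using App.prems(2) unfolding normal_def by (auto intro: beta.b_lam)
  moreover have "\<forall>m. t \<noteq> TLam m" using t by (auto elim: has_type_TLamE)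
  ultimately show ?case by (auto intro: App.IH head_App)
next
  case (TApp t Y)
  from TApp.prems(1) obtain A where t: "has_type [] t (All A)" by (auto elim: has_type_TAppE)
  moreover have "normal t" using TApp.prems(2) by (rule normal_TAppD)
  moreover have "\<forall>m. t \<noteq> TLam m" using TApp.prems(2) unfolding normal_def by (auto intro: beta.b_tlam)
  moreover have "\<forall>m. t \<noteq> Lam m" using t by (auto elim: has_type_LamE)
  ultimately show ?case by (auto intro: TApp.IH head_TApp)
qed auto

lemma atomsF_substF_0: "atomsF (substF 0 Y A) \<subseteq> insert Y (atomsF (All A))"
  by (auto simp: substF_eq_renF atomsF_renF inst_atom_def)

lemma atomsF_type_const_headed: "const_headed t \<Longrightarrow> has_type \<Gamma> t B \<Longrightarrow> atomsF B \<subseteq> atomsT t"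
proof (induction arbitrary: B rule: const_headed.induct)
  case (head_Cst D)
  then show ?case by (auto elim: has_type_CstE)
next
  case (head_App t s)
  then show ?case by (fastforce elim: has_type_AppE)
next
  case (head_TApp t Y)
  from head_TApp.prems obtain A where "B = substF 0 Y A" "has_type \<Gamma> t (All A)"
    by (auto elim: has_type_TAppE)
  with head_TApp.IH atomsF_substF_0[of Y A] show ?case by fastforce
qed

definition rebind :: "nat \<Rightarrow> nat \<Rightarrow> nat" where
  "rebind Y i = (if i = Y then 0 else Suc i)"

lemma rebind_inst_atom: "i \<noteq> Suc Y \<Longrightarrow> rebind Y (inst_atom 0 Y i) = i"
  by (cases i) (auto simp: rebind_def inst_atom_def)

lemma renF_rebind_substF:
  assumes "Y \<notin> atomsF (All A)"
  shows "renF (rebind Y) (substF 0 Y A) = A"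
proof -
  have "renF (rebind Y \<circ> inst_atom 0 Y) A = renF (\<lambda>i. i) A"
    by (rule renF_cong) (use assms in \<open>auto intro: rebind_inst_atom\<close>)
  then show ?thesis by (simp add: substF_eq_renF renF_ident)
qed

lemma renT_rebind_substT:
  assumes "Y \<notin> atomsT (TLam m)"
  shows "renT (rebind Y) (substT 0 Y m) = m"
proof -
  have "renT (rebind Y \<circ> inst_atom 0 Y) m = renT (\<lambda>i. i) m"
    by (rule renT_cong) (use assms in \<open>auto intro: rebind_inst_atom\<close>)
  then show ?thesis by (simp add: substT_eq_renT renT_ident)
qed

section \<open>Adequacy of the E-phase model\<close>

lemma Cst_in_sem: "Cst A \<in> sem A"
  unfolding sem_def closed_def by (auto intro: normal_Cst has_type.ty_cst)

lemma star_closed: "t \<in> star A \<Longrightarrow> closed t"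
  by (cases A) (auto simp: sem_def)

lemma const_headed_App_sem:
  assumes "const_headed t" "t \<in> sem (Imp A B)" "s \<in> sem A"
  shows "App t s \<in> sem B"
proof -
  from assms(2) obtain n where
    t: "closed t" "reds t n" "normal n" "has_type [] n (Imp A B)"
    by (auto simp: sem_def)
  from assms(3) obtain s' where s: "closed s" "reds s s'" "normal s'" "has_type [] s' A"
    by (auto simp: sem_def)
  have "const_headed n" using const_headed_reds[OF t(2) assms(1)] .
  then have "normal (App n s')" using t(3) s(3) by (rule normal_App_const_headed)
  moreover have "reds (App t s) (App n s')" using t(2) s(2) by (rule reds_App)
  moreover have "has_type [] (App n s') B" using t(4) s(4) by (rule has_type.ty_app)
  ultimately show ?thesis using t(1) s(1) by (auto simp: sem_def closed_def)
qed

lemma const_headed_TApp_sem: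
  assumes "const_headed t" "t \<in> sem (All A)"
  shows "TApp t Y \<in> sem (substF 0 Y A)"
proof -
  from assms(2) obtain n where t: "closed t" "reds t n" "normal n" "has_type [] n (All A)"
    by (auto simp: sem_def)
  have "const_headed n" using const_headed_reds[OF t(2) assms(1)] .
  then have "normal (TApp n Y)" using t(3) by (rule normal_TApp_const_headed)
  moreover have "reds (TApp t Y) (TApp n Y)" using t(2) by (rule reds_TApp)
  moreover have "has_type [] (TApp n Y) (substF 0 Y A)" using t(4) by (rule has_type.ty_tapp)
  ultimately show ?thesis using t(1) by (auto simp: sem_def closed_def)
qed

lemma sem_ImpI:
  assumes "closed t" "App t (Cst A) \<in> sem B"
  shows "t \<in> sem (Imp A B)"
proof -
  from assms(2) obtain u where u: "reds (App t (Cst A)) u" "normal u" "has_type [] u B"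
    by (auto simp: sem_def)
  from u(1) show ?thesis
  proof (cases rule: reds_App_cases)
    case (congr t' s')
    then have u_eq: "u = App t' (Cst A)" using reds_Cst by simp
    have "normal t'" using u(2) u_eq by (simp add: normal_AppD)
    moreover have "has_type [] t' (Imp A B)"
      using u(3) u_eq by (auto elim: has_type_AppE has_type_CstE)
    ultimately show ?thesis using assms(1) \<open>reds t t'\<close> by (auto simp: sem_def)
  next
    case (contract m s')
    then have "reds (substV 0 (Cst A) m) u" using reds_Cst[of A s'] by simp
    then obtain m' where m': "reds m m'" "u = substV 0 (Cst A) m'"
      using reds_pullback[OF beta_substV_Cst_back] by blast
    have "normal (Lam m')" using u(2) m'(2) by (simp add: normal_substV_Cst normal_Lam)
    moreover have "has_type [] (Lam m') (Imp A B)"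
      using has_type_substV_Cst[of "[]" 0 A m' B] u(3) m'(2) by (simp add: has_type.ty_lam)
    moreover have "reds t (Lam m')" using \<open>reds t (Lam m)\<close> reds_Lam[OF m'(1)] by simp
    ultimately show ?thesis using assms(1) by (auto simp: sem_def)
  qed
qed

lemma sem_AllI:
  assumes "closed t" "Y \<notin> atomsT t" "Y \<notin> atomsF (All A)" "TApp t Y \<in> sem (substF 0 Y A)"
  shows "t \<in> sem (All A)"
proof -
  from assms(4) obtain u where u: "reds (TApp t Y) u" "normal u" "has_type [] u (substF 0 Y A)"
    by (auto simp: sem_def)
  from u(1) show ?thesis
  proof (cases rule: reds_TApp_cases)
    case (congr t')
    from u(3) obtain A' where t': "has_type [] t' (All A')" "substF 0 Y A' = substF 0 Y A"
      using congr(2) by (auto elim: has_type_TAppE)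
    have "normal t'" using u(2) congr(2) by (simp add: normal_TAppD)
    moreover have "\<forall>m. t' \<noteq> TLam m" using u(2) congr(2) unfolding normal_def by (auto intro: beta.b_tlam)
    moreover have "\<forall>m. t' \<noteq> Lam m" using t'(1) by (auto elim: has_type_LamE)
    ultimately have "const_headed t'" using t'(1) normal_typed_const_headed by blast
    then have "atomsF (All A') \<subseteq> atomsT t"
      using atomsF_type_const_headed[OF _ t'(1)] atomsT_reds[OF congr(1)] by blast
    then have "Y \<notin> atomsF (All A')" using assms(2) by blast
    then have "A' = renF (rebind Y) (substF 0 Y A')" by (rule renF_rebind_substF[symmetric])
    also have "\<dots> = A" using t'(2) assms(3) renF_rebind_substF by simp
    finally have "A' = A" .
    then show ?thesis using assms(1) congr(1) \<open>normal t'\<close> t'(1) by (auto simp: sem_def)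
  next
    case (contract m)
    obtain m' where m': "reds m m'" "u = substT 0 Y m'"
      using reds_pullback[OF beta_renT_back] contract(2) unfolding substT_eq_renT by blast
    have "normal (TLam m')" using u(2) m'(2) by (simp add: substT_eq_renT normal_renT normal_TLam)
    moreover have "reds t (TLam m')" using contract(1) reds_TLam[OF m'(1)] by simp
    moreover have "Y \<notin> atomsT (TLam m')"
      using assms(2) atomsT_reds[OF calculation(2)] by blast
    then have "has_type [] m' A"
      using has_type_renT[OF u(3), of "rebind Y"] m'(2) assms(3)
      by (simp add: renT_rebind_substT renF_rebind_substF)
    then have "has_type [] (TLam m') (All A)" using has_type.ty_tlam[of "[]"] by simp
    ultimately show ?thesis using assms(1) by (auto simp: sem_def)
  qed
qed

definition adequate :: "fm \<Rightarrow> bool" where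
  "adequate A \<longleftrightarrow> (\<forall>t. const_headed t \<longrightarrow> t \<in> sem A \<longrightarrow> t \<in> star A) \<and> star A \<subseteq> sem A"

lemma adequate_Imp:
  assumes "adequate A" "adequate B"
  shows "adequate (Imp A B)"
  unfolding adequate_def
proof (intro conjI allI impI subsetI)
  fix t assume t: "const_headed t" "t \<in> sem (Imp A B)"
  have "App t s \<in> star B" if "s \<in> star A" for s
  proof -
    have "s \<in> sem A" using that assms(1) unfolding adequate_def by blast
    then have "App t s \<in> sem B" using t const_headed_App_sem by blast
    then show ?thesis using assms(2) head_App[OF t(1)] unfolding adequate_def by blast
  qed
  moreover have "closed t" using t(2) by (simp add: sem_def)
  ultimately show "t \<in> star (Imp A B)" by simp
next
  fix t assume t: "t \<in> star (Imp A B)"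
  have "Cst A \<in> star A" using assms(1) Cst_in_sem head_Cst unfolding adequate_def by blast
  then have "App t (Cst A) \<in> sem B" using t assms(2) unfolding adequate_def by auto
  then show "t \<in> sem (Imp A B)" using star_closed[OF t] by (intro sem_ImpI)
qed

lemma adequate_All:
  assumes "\<And>Y. adequate (substF 0 Y A)"
  shows "adequate (All A)"
  unfolding adequate_def
proof (intro conjI allI impI subsetI)
  fix t assume t: "const_headed t" "t \<in> sem (All A)"
  have "TApp t Y \<in> star (substF 0 Y A)" for Y
    using const_headed_TApp_sem[OF t] assms head_TApp[OF t(1)] unfolding adequate_def by blast
  moreover have "closed t" using t(2) by (simp add: sem_def)
  ultimately show "t \<in> star (All A)" by simp
next
  fix t assume t: "t \<in> star (All A)"
  have "finite (atomsT t \<union> atomsF (All A))" by (simp only: finite_Un finite_atomsT finite_atomsF)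
  then obtain Y where Y: "Y \<notin> atomsT t \<union> atomsF (All A)"
    using ex_new_if_finite[OF infinite_UNIV_nat] by blast
  have "TApp t Y \<in> sem (substF 0 Y A)" using t assms unfolding adequate_def by auto
  then show "t \<in> sem (All A)" using star_closed[OF t] Y by (intro sem_AllI) auto
qed

lemma adequate: "adequate A"
proof (induction "size A" arbitrary: A rule: less_induct)
  case less
  show ?case
  proof (cases A)
    case (At X)
    then show ?thesis by (simp add: adequate_def)
  next
    case (Imp B C)
    then show ?thesis using less by (simp add: adequate_Imp)
  next
    case (All B)
    then show ?thesis using less by (simp add: adequate_All)
  qed
qed

theorem mainTheorem7:
  fixes A :: fm
  shows "(\<forall>D Ts. (\<forall>T \<in> set Ts. case T of Inl t \<Rightarrow> closed t | Inr Y \<Rightarrow> True)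
            \<longrightarrow> apps (Cst D) Ts \<in> sem A \<longrightarrow> apps (Cst D) Ts \<in> star A)
         \<and> star A \<subseteq> sem A"
proof -
  have "apps (Cst D) Ts \<in> star A" if "apps (Cst D) Ts \<in> sem A" for D Ts
    using adequate[of A] const_headed_apps[OF head_Cst] that unfolding adequate_def by blast
  then show ?thesis using adequate[of A] unfolding adequate_def by blast
qed

end
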